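(* Let $m,K$ be positive integers and $b_1,\dots,b_{3m}$ positive integers with $K/4<b_i<K/2$ and $\sum_i b_i=mK$. Set $W=100(5m)^2K$, $a_i=b_i+W$, $A=\{a_1,\dots,a_{3m}\}$, $L=3W+K$, $\epsilon=1/(400(5m)^2)$, $h=\lfloor 4\epsilon L\rfloor$, $H=L+h$. Let $X$ be the multiset consisting of $a_1,\dots,a_{3m}$, $m$ copies of $-H$ and $m$ copies of $h$, and let $T_{\min}$ be a minimum-cost addition tree over $X$. Then $C(T_{\min})\ge m(H+h)$. Moreover, $C(T_{\min})=m(H+h)$ if and only if $(A,L)$ is a positive instance of 3-PARTITION.
   Context: An addition tree over a multiset $X$ is a full binary tree whose leaves are labeled by the elements of $X$ (each used once), each internal node having value equal to the sum of its children's values; its cost $C(T)$ is the sum of the absolute values of the values of its internal nodes, and $T_{\min}$ minimizes $C$. $(A,L)$ is a positive instance of 3-PARTITION if $A$ can be partitioned into $m$ disjoint submultisets each summing to $L$. *)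

theory Defs
  imports Complex_Main "HOL-Library.Multiset"
begin

datatype atree = Leaf int | Node atree atree

fun leaves :: "atree \<Rightarrow> int multiset" where
  "leaves (Leaf x) = {#x#}"
| "leaves (Node l r) = leaves l + leaves r"

fun tval :: "atree \<Rightarrow> int" where
  "tval (Leaf x) = x"
| "tval (Node l r) = tval l + tval r"

fun cost :: "atree \<Rightarrow> int" where
  "cost (Leaf x) = 0"
| "cost (Node l r) = \<bar>tval l + tval r\<bar> + cost l + cost r"

definition addition_tree_over :: "atree \<Rightarrow> int multiset \<Rightarrow> bool" where
  "addition_tree_over T X \<longleftrightarrow> leaves T = X"

definition min_cost_tree :: "atree \<Rightarrow> int multiset \<Rightarrow> bool" where
  "min_cost_tree T X \<longleftrightarrow> addition_tree_over T X \<and>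
     (\<forall>T'. addition_tree_over T' X \<longrightarrow> cost T \<le> cost T')"

definition three_partition_pos :: "int multiset \<Rightarrow> nat \<Rightarrow> int \<Rightarrow> bool" where
  "three_partition_pos A m L \<longleftrightarrow>
     (\<exists>P :: int multiset multiset. size P = m \<and> sum_mset P = A \<and>
        (\<forall>B\<in>#P. sum_mset B = L))"

end

(*
  A potential argument.  For a submultiset S of X let w(S) be the number of items a_i in S
  minus three times the number of copies of -H; then the sum of S is W w(S) plus an offset of
  absolute value at most (K + h) |S|, which is negligible against W.  The potential

    Phi(S) = W (6 #(-H in S) - psi(w(S))) + phi(S)

  is at most 0 on single leaves and grows by at most 2 |sum S1 + sum S2| when two disjoint
  subtrees S1, S2 are merged, so Phi(X) <= 2 C(T) for every addition tree T over X.  The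
  function psi makes every merge cost an extra W unless it is one of the few merges occurring
  in the gadget trees ((y + z) - H + x) + h; for those, the lower order part phi, which only
  looks at the counts of items, -H's and h's in S and at the excess of the items over W, takes
  over.  At the root Phi(X) = 2 m (H + h) + 2 d, where d = 0 only if X splits into blocks
  {x, y, z, -H, h} of sum 0, i.e. if A has a 3-partition with sums L = H - h.  Conversely,
  the gadget trees of such a partition cost exactly m (H + h).
*)

theory Submission
  imports Defs
begin

lemma sum_mset_lower_bound:
  fixes f :: "'a \<Rightarrow> 'b::linordered_semiring_1"
  assumes "\<And>y. y \<in># F \<Longrightarrow> c \<le> f y"
  shows "of_nat (size F) * c \<le> (\<Sum>y\<in>#F. f y)"
  using sum_mset_mono[of F "\<lambda>_. c" f] assms by simp

lemma sum_mset_upper_bound: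
  fixes f :: "'a \<Rightarrow> 'b::linordered_semiring_1"
  assumes "\<And>y. y \<in># F \<Longrightarrow> f y \<le> c"
  shows "(\<Sum>y\<in>#F. f y) \<le> of_nat (size F) * c"
  using sum_mset_mono[of F f "\<lambda>_. c"] assms by simp

lemma add_le_power2_diff:
  fixes a b :: int
  assumes "0 \<le> a" and "1 \<le> b"
  shows "a + b \<le> (a + b) ^ 2 - a ^ 2"
proof -
  have "a \<le> a * b" "b \<le> b * b"
    using assms mult_left_mono[of 1 b a] mult_left_mono[of 1 b b] by auto
  moreover have "(a + b) ^ 2 - a ^ 2 = 2 * (a * b) + b * b"
    by (simp add: power2_eq_square algebra_simps)
  ultimately show ?thesis
    using assms by linarith
qed

lemma filter_mset_sum_mset:
  "filter_mset P (sum_mset M) = sum_mset (image_mset (filter_mset P) M)"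
  by (induction M) simp_all

lemma size_eq_3_obtain:
  assumes "size B = 3"
  obtains x y z where "B = {#x, y, z#}"
proof -
  obtain x B1 where "B = add_mset x B1" "size B1 = 2"
    using size_eq_Suc_imp_eq_union[of B 2] assms by auto
  moreover obtain y B2 where "B1 = add_mset y B2" "size B2 = 1"
    using size_eq_Suc_imp_eq_union[of B1 1] calculation(2) by auto
  moreover obtain z where "B2 = {#z#}"
    using calculation(4) size_1_singleton_mset by blast
  ultimately show ?thesis
    using that by blast
qed

lemma sum_mset_minus_const:
  fixes f :: "'a \<Rightarrow> 'b::comm_ring_1"
  shows "(\<Sum>y\<in>#F. f y - c) = (\<Sum>y\<in>#F. f y) - of_nat (size F) * c"
  by (induction F) (simp_all add: algebra_simps)

section \<open>Addition trees and potentials\<close>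

lemma tval_eq_sum_leaves: "tval T = sum_mset (leaves T)"
  by (induction T) auto

lemma leaves_not_empty: "leaves T \<noteq> {#}"
  by (induction T) auto

lemma potential_le_cost:
  fixes \<Phi> :: "int multiset \<Rightarrow> int"
  assumes leaf: "\<And>x. x \<in># X \<Longrightarrow> \<Phi> {#x#} \<le> 0"
    and merge: "\<And>S1 S2. S1 + S2 \<subseteq># X \<Longrightarrow> S1 \<noteq> {#} \<Longrightarrow> S2 \<noteq> {#} \<Longrightarrow>
      \<Phi> (S1 + S2) \<le> 2 * \<bar>sum_mset (S1 + S2)\<bar> + \<Phi> S1 + \<Phi> S2"
    and "leaves T \<subseteq># X"
  shows "\<Phi> (leaves T) \<le> 2 * cost T"
  using \<open>leaves T \<subseteq># X\<close>
proof (induction T)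
  case (Leaf x)
  then show ?case using leaf by simp
next
  case (Node l r)
  then have "leaves l \<subseteq># X" "leaves r \<subseteq># X"
    by (auto intro: subset_mset.order_trans[rotated])
  with Node merge[of "leaves l" "leaves r"] show ?case
    by (simp add: tval_eq_sum_leaves leaves_not_empty)
qed

(* The partial sums of this tree are y + z, y + z - H, -h and 0. *)
lemma triple_gadget:
  assumes "h \<ge> 0" and "0 \<le> y + z" and "y + z \<le> H" and "x + y + z = H - h"
  shows "\<exists>T. leaves T = {#x, y, z, -H, h#} \<and> tval T = 0 \<and> cost T = H + h"
proof -
  define T where "T = Node (Node (Node (Node (Leaf y) (Leaf z)) (Leaf (-H))) (Leaf x)) (Leaf h)"
  have "cost T = (y + z) + (H - (y + z)) + h"
    using assms by (simp add: T_def)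
  moreover have "leaves T = {#x, y, z, -H, h#}" "tval T = 0"
    using assms(4) by (simp_all add: T_def add_mset_commute)
  ultimately show ?thesis by auto
qed

lemma triple_gadgets_tree:
  fixes P :: "int multiset multiset"
  assumes "h \<ge> 0" and "P \<noteq> {#}"
    and "\<And>B. B \<in># P \<Longrightarrow> \<exists>x y z. B = {#x, y, z#} \<and> 0 \<le> y + z \<and> y + z \<le> H \<and> x + y + z = H - h"
  shows "\<exists>T. leaves T = sum_mset P + replicate_mset (size P) (-H) + replicate_mset (size P) h
    \<and> tval T = 0 \<and> cost T = int (size P) * (H + h)"
  using assms(2,3)
proof (induction P)
  case empty
  then show ?case by simp
next
  case (add B P)
  obtain x y z where B: "B = {#x, y, z#}" "0 \<le> y + z" "y + z \<le> H" "x + y + z = H - h"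
    using add.prems(2)[of B] by auto
  obtain TB where TB: "leaves TB = B + {#-H, h#}" "tval TB = 0" "cost TB = H + h"
    using triple_gadget[OF assms(1) B(2-4)] B(1) by (auto simp: add_mset_commute)
  show ?case
  proof (cases "P = {#}")
    case True
    with TB show ?thesis by (auto simp: add_mset_commute)
  next
    case False
    then obtain T where "leaves T = sum_mset P + replicate_mset (size P) (-H) + replicate_mset (size P) h"
      "tval T = 0" "cost T = int (size P) * (H + h)"
      using add by auto
    with TB show ?thesis
      by (intro exI[of _ "Node TB T"]) (simp add: algebra_simps add_mset_commute)
  qed
qed

section \<open>The piecewise linear bonus psi\<close>

(* The values of psi are tuned so that the merges inside a gadget tree, and only those,
   are tight in psi_add_le. *)
definition psi :: "int \<Rightarrow> int" where
  "psi w = (if w \<ge> 3 then -4 - w else if w \<le> -4 then 1 else if w = -3 then 6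
            else if w = -2 then 2 else if w = 2 then -4 else 0)"

lemma psi_breakpoint_cases:
  fixes w :: int
  obtains "w \<ge> 3" | "w \<le> -4" | "w = -3" | "w = -2" | "w = -1" | "w = 0" | "w = 1" | "w = 2"
  by linarith

lemma psi_add_le: "psi u + psi v \<le> psi (u + v) + 2 * \<bar>u + v\<bar>"
  by (cases u rule: psi_breakpoint_cases; cases v rule: psi_breakpoint_cases)
     (auto simp: psi_def abs_if split: if_splits)

lemma psi_add_eq_cases:
  assumes "psi u + psi v = psi (u + v) + 2 * \<bar>u + v\<bar>" and "u \<le> v"
  shows "(u, v) \<in> {(1, 1), (-3, 2), (-3, 1), (-2, 1), (-1, 1), (0, 0)}"
  using assms
  by (cases u rule: psi_breakpoint_cases; cases v rule: psi_breakpoint_cases)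
     (auto simp: psi_def abs_if split: if_splits, presburger)

section \<open>The reduction instance\<close>

(* The setting of the theorem: A collects the items a_i = b_i + W, with the bounds
   K/4 < b_i < K/2 cleared of denominators; of the definition of h only 3K <= h <= 4K is used. *)
locale three_partition_reduction =
  fixes m :: nat and K W h H :: int and A :: "int multiset"
  assumes m_pos: "m > 0" and K_pos: "K > 0"
    and W_eq: "W = 2500 * int m ^ 2 * K"
    and h_lower: "3 * K \<le> h" and h_upper: "h \<le> 4 * K"
    and H_eq: "H = 3 * W + K + h"
    and A_bounds: "\<And>x. x \<in># A \<Longrightarrow> 4 * W + K < 4 * x \<and> 2 * x < 2 * W + K"
    and size_A: "size A = 3 * m"
    and sum_A: "sum_mset A = int m * (3 * W + K)"
begin

abbreviation X :: "int multiset" where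
  "X \<equiv> A + replicate_mset m (-H) + replicate_mset m h"

lemma W_large: "500 * ((K + h) * int m ^ 2) \<le> W"
proof -
  have "(K + h) * int m ^ 2 \<le> (5 * K) * int m ^ 2"
    using h_upper by (intro mult_right_mono) auto
  then show ?thesis
    using W_eq by simp
qed

lemma m_sq_ge: "int m \<le> int m ^ 2" "1 \<le> int m ^ 2"
proof -
  have "1 \<le> int m"
    using m_pos by simp
  then show "int m \<le> int m ^ 2"
    using mult_left_mono[of 1 "int m" "int m"] by (simp add: power2_eq_square)
  show "1 \<le> int m ^ 2"
    using \<open>1 \<le> int m\<close> by (rule one_le_power)
qed

lemma h_pos: "h > 0"
  using h_lower K_pos by simp

lemma W_ge: "W \<ge> 2500 * K"
  using W_eq K_pos m_sq_ge(2) by simp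

lemma A_gt_W: "x \<in># A \<Longrightarrow> W < x"
  using A_bounds K_pos by force

lemma neg_ne_pad: "-H \<noteq> h"
  using H_eq W_ge h_pos K_pos by simp

definition is_item :: "int \<Rightarrow> bool" where
  "is_item x \<longleftrightarrow> x \<noteq> -H \<and> x \<noteq> h"

lemma is_item_A:
  assumes "x \<in># A"
  shows "is_item x"
proof -
  have "x \<noteq> -H" "x \<noteq> h"
    using A_gt_W[OF assms] H_eq W_ge K_pos h_pos h_upper by linarith+
  then show ?thesis
    by (simp add: is_item_def)
qed

lemma filter_item_X: "filter_mset is_item X = A"
proof -
  have "filter_mset is_item A = A"
    using is_item_A by (simp add: filter_mset_eq_conv)
  moreover have "filter_mset is_item (replicate_mset m (-H)) = {#}"
    "filter_mset is_item (replicate_mset m h) = {#}"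
    by (simp_all add: is_item_def)
  ultimately show ?thesis
    by simp
qed

lemma X_elem_cases: "x \<in># X \<Longrightarrow> x = -H \<or> x = h \<or> x \<in># A"
  by (auto split: if_splits)

definition items :: "int multiset \<Rightarrow> int" where
  "items S = int (size (filter_mset is_item S))"

definition negs :: "int multiset \<Rightarrow> int" where
  "negs S = int (count S (-H))"

definition pads :: "int multiset \<Rightarrow> int" where
  "pads S = int (count S h)"

(* The sum of the b_i = a_i - W over the items of S. *)
definition excess :: "int multiset \<Rightarrow> int" where
  "excess S = (\<Sum>x\<in>#filter_mset is_item S. x - W)"

definition weight :: "int multiset \<Rightarrow> int" where
  "weight S = items S - 3 * negs S"

definition offset :: "int multiset \<Rightarrow> int" where
  "offset S = excess S - negs S * (K + h) + pads S * h"

lemma counts_empty [simp]: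
  "items {#} = 0" "negs {#} = 0" "pads {#} = 0" "excess {#} = 0"
  by (simp_all add: items_def negs_def pads_def excess_def)

lemma counts_add_mset [simp]:
  "items (add_mset x S) = items S + (if is_item x then 1 else 0)"
  "negs (add_mset x S) = negs S + (if x = -H then 1 else 0)"
  "pads (add_mset x S) = pads S + (if x = h then 1 else 0)"
  "excess (add_mset x S) = excess S + (if is_item x then x - W else 0)"
  by (simp_all add: items_def negs_def pads_def excess_def)

lemma counts_union [simp]:
  "items (S + T) = items S + items T" "negs (S + T) = negs S + negs T"
  "pads (S + T) = pads S + pads T" "excess (S + T) = excess S + excess T"
  "weight (S + T) = weight S + weight T" "offset (S + T) = offset S + offset T"
  by (simp_all add: items_def negs_def pads_def excess_def weight_def offset_def algebra_simps)

lemma size_eq_counts: "int (size S) = items S + negs S + pads S"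
  using neg_ne_pad by (induction S) (auto simp: is_item_def)

lemma singleton_eq_weight_offset: "x = W * weight {#x#} + offset {#x#}"
proof -
  consider "x = -H" | "x = h" | "is_item x"
    by (auto simp: is_item_def)
  then show ?thesis
  proof cases
    case 1
    then have "weight {#x#} = -3" "offset {#x#} = -(K + h)"
      using neg_ne_pad by (simp_all add: weight_def offset_def is_item_def)
    then show ?thesis
      using 1 H_eq by simp
  next
    case 2
    then have "weight {#x#} = 0" "offset {#x#} = h"
      using neg_ne_pad by (simp_all add: weight_def offset_def is_item_def)
    then show ?thesis
      using 2 by simp
  next
    case 3
    then have "weight {#x#} = 1" "offset {#x#} = x - W"
      by (auto simp: weight_def offset_def is_item_def)
    then show ?thesis
      by simp
  qed
qed

lemma sum_mset_eq_weight_offset: "sum_mset S = W * weight S + offset S"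
proof (induction S)
  case (add x S)
  have "add_mset x S = {#x#} + S"
    by simp
  then show ?case
    using add.IH singleton_eq_weight_offset[of x]
    by (simp only: sum_mset.union counts_union) (simp add: algebra_simps)
qed (simp add: weight_def offset_def)

lemma counts_X: "items X = 3 * int m" "negs X = int m" "pads X = int m" "excess X = int m * K"
proof -
  have "count A (-H) = 0" "count A h = 0"
    using is_item_A by (auto simp: is_item_def count_eq_zero_iff)
  then show "items X = 3 * int m" "negs X = int m" "pads X = int m"
    using filter_item_X size_A neg_ne_pad by (simp_all add: items_def negs_def pads_def)
  have "excess X = sum_mset A - int (size A) * W"
    using filter_item_X by (simp add: excess_def sum_mset_minus_const)
  then show "excess X = int m * K"
    using sum_A size_A by (simp add: algebra_simps)
qed

lemma excess_bounds:
  assumes "S \<subseteq># X"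
  shows "items S * K + items S \<le> 4 * excess S" "2 * excess S \<le> items S * K - items S"
proof -
  have items: "y \<in># A" if "y \<in># filter_mset is_item S" for y
    using that mset_subset_eqD[OF multiset_filter_mono[OF assms, of is_item]]
    by (simp only: filter_item_X)
  have "items S * (K + 1) \<le> (\<Sum>y\<in>#filter_mset is_item S. 4 * (y - W))"
    unfolding items_def using A_bounds[OF items] by (intro sum_mset_lower_bound) force
  then show "items S * K + items S \<le> 4 * excess S"
    by (simp add: excess_def sum_mset_distrib_left algebra_simps)
  have "(\<Sum>y\<in>#filter_mset is_item S. 2 * (y - W)) \<le> items S * (K - 1)"
    unfolding items_def using A_bounds[OF items] by (intro sum_mset_upper_bound) force
  then show "2 * excess S \<le> items S * K - items S"
    by (simp add: excess_def sum_mset_distrib_left algebra_simps)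
qed

lemma counts_bounds:
  assumes "S \<subseteq># X"
  shows "0 \<le> items S" "0 \<le> negs S" "0 \<le> pads S" "0 \<le> excess S"
    "negs S \<le> int m" "int (size S) \<le> 5 * int m"
proof -
  show "0 \<le> items S" "0 \<le> negs S" "0 \<le> pads S"
    by (simp_all add: items_def negs_def pads_def)
  then show "0 \<le> excess S"
    using excess_bounds(1)[OF assms] mult_nonneg_nonneg[of "items S" K] K_pos by linarith
  show "negs S \<le> int m"
    using mset_subset_eq_count[OF assms, of "-H"] counts_X(2) by (simp add: negs_def)
  show "int (size S) \<le> 5 * int m"
    using size_mset_mono[OF assms] size_A by simp
qed

lemma offset_abs_le:
  assumes "S \<subseteq># X"
  shows "\<bar>offset S\<bar> \<le> (K + h) * int (size S)"
proof -
  note b = excess_bounds[OF assms] counts_bounds[OF assms]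
  have "items S * K \<le> items S * (K + h)" "pads S * h \<le> pads S * (K + h)"
    using b h_pos K_pos by (simp_all add: mult_left_mono)
  moreover have "0 \<le> negs S * (K + h)" "0 \<le> pads S * h"
    using b h_pos K_pos by simp_all
  moreover have "(K + h) * int (size S) = items S * (K + h) + negs S * (K + h) + pads S * (K + h)"
    by (simp add: size_eq_counts algebra_simps)
  ultimately show ?thesis
    using b unfolding offset_def abs_le_iff by linarith
qed

lemma size_sq_le:
  assumes "S \<subseteq># X"
  shows "(K + h) * int (size S) ^ 2 \<le> 25 * ((K + h) * int m ^ 2)"
proof -
  have "int (size S) ^ 2 \<le> (5 * int m) ^ 2"
    using counts_bounds(6)[OF assms] by (intro power_mono) auto
  then show ?thesis
    using h_pos K_pos by (simp add: power_mult_distrib)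
qed

definition profile :: "int multiset \<Rightarrow> int \<times> int \<times> int" where
  "profile S = (items S, negs S, pads S)"

definition regular :: "int multiset \<Rightarrow> bool" where
  "regular S \<longleftrightarrow>
    profile S \<in> {(1, 0, 0), (0, 1, 0), (2, 0, 0), (1, 1, 0), (2, 1, 0)} \<or> items S = 3 * negs S"

definition closed_block :: "int multiset \<Rightarrow> bool" where
  "closed_block B \<longleftrightarrow> profile B = (3, 1, 1) \<and> sum_mset B = 0"

definition open_block :: "int multiset \<Rightarrow> bool" where
  "open_block R \<longleftrightarrow> profile R = (3, 1, 0)"

definition admissible_residue :: "int multiset \<Rightarrow> bool" where
  "admissible_residue R \<longleftrightarrow> R = {#} \<or> R = {#h#} \<or> open_block R"

definition decomposable :: "int multiset \<Rightarrow> bool" where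
  "decomposable S \<longleftrightarrow>
    (\<exists>P R. S = sum_mset P + R \<and> (\<forall>B\<in>#P. closed_block B) \<and> admissible_residue R)"

(* defect X is the extra unit in the lower bound when A has no 3-partition. *)
definition defect :: "int multiset \<Rightarrow> int" where
  "defect S = (if decomposable S then 0 else 1)"

(* The regular profiles are those of partial gadgets and of multisets with three items per
   copy of -H.  An irregular profile only arises from a non-tight merge, whose slack W pays for
   a fine potential of almost W; the term -2 (K + h) |S|^2 makes it decrease under further
   merges fast enough to pay for the offsets. *)
definition fine_potential :: "int multiset \<Rightarrow> int" where
  "fine_potential S =
    (if profile S = (2, 0, 0) then 2 * excess S
     else if profile S = (1, 1, 0) then 2 * (K + h - excess S)
     else if profile S = (2, 1, 0) then 2 * (K + h)
     else if items S = 3 * negs S then 4 * (negs S * (K + h)) - 2 * excess S + 2 * defect S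
     else if regular S then 0
     else W - 2 * (K + h) * int (size S) ^ 2)"

definition potential :: "int multiset \<Rightarrow> int" where
  "potential S = W * (6 * negs S - psi (weight S)) + fine_potential S"

lemma counts_singleton_pad:
  "items {#h#} = 0" "negs {#h#} = 0" "pads {#h#} = 1" "excess {#h#} = 0"
  using neg_ne_pad by (simp_all add: is_item_def)

lemma defect_bounds: "0 \<le> defect S" "defect S \<le> 1"
  by (simp_all add: defect_def)

lemma decomposable_residue: "admissible_residue R \<Longrightarrow> decomposable R"
  unfolding decomposable_def by (rule exI[of _ "{#}"]) simp

lemma sum_closed_blocks: "\<forall>B\<in>#P. closed_block B \<Longrightarrow> sum_mset (sum_mset P) = 0"
  by (induction P) (auto simp: closed_block_def)

lemma open_block_sum_neg:
  assumes "open_block R" and "R \<subseteq># X"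
  shows "sum_mset R < 0"
  using sum_mset_eq_weight_offset[of R] excess_bounds[OF assms(2)] assms(1) h_lower K_pos
  by (simp add: open_block_def profile_def weight_def offset_def)

lemma residue_merge:
  assumes "R1 + R2 \<subseteq># X" and "admissible_residue R1" and "admissible_residue R2"
    and "sum_mset (R1 + R2) = 0"
  shows "admissible_residue (R1 + R2) \<or> closed_block (R1 + R2)"
proof (cases "R1 = {#} \<or> R2 = {#}")
  case True
  then show ?thesis
    using assms(2,3) by auto
next
  case False
  have "R1 \<subseteq># X" "R2 \<subseteq># X"
    using assms(1) by (auto intro: subset_mset.order_trans[rotated])
  then have "open_block R1 \<Longrightarrow> sum_mset R1 < 0" "open_block R2 \<Longrightarrow> sum_mset R2 < 0"
    using open_block_sum_neg by blast+
  moreover have "R1 = {#h#} \<or> open_block R1" "R2 = {#h#} \<or> open_block R2"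
    using False assms(2,3) by (auto simp: admissible_residue_def)
  ultimately have "R1 = {#h#} \<and> open_block R2 \<or> open_block R1 \<and> R2 = {#h#}"
    using assms(4) h_pos by auto
  then show ?thesis
    using assms(4) counts_singleton_pad by (auto simp: closed_block_def open_block_def profile_def)
qed

lemma decomposable_merge:
  assumes "S1 + S2 \<subseteq># X" and "decomposable S1" and "decomposable S2"
    and "sum_mset (S1 + S2) = 0"
  shows "decomposable (S1 + S2)"
proof -
  obtain P1 R1 where S1: "S1 = sum_mset P1 + R1" "\<forall>B\<in>#P1. closed_block B" "admissible_residue R1"
    using assms(2) unfolding decomposable_def by blast
  obtain P2 R2 where S2: "S2 = sum_mset P2 + R2" "\<forall>B\<in>#P2. closed_block B" "admissible_residue R2"
    using assms(3) unfolding decomposable_def by blast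
  have P: "\<forall>B\<in>#P1 + P2. closed_block B"
    using S1(2) S2(2) by auto
  have S12: "S1 + S2 = sum_mset (P1 + P2) + (R1 + R2)"
    using S1(1) S2(1) by simp
  then have "R1 + R2 \<subseteq># X"
    using assms(1) by (metis mset_subset_eq_add_right subset_mset.order_trans)
  moreover have "sum_mset (R1 + R2) = 0"
    using assms(4) S12 sum_closed_blocks[OF P] by simp
  ultimately consider "admissible_residue (R1 + R2)" | "closed_block (R1 + R2)"
    using residue_merge S1(3) S2(3) by blast
  then show ?thesis
  proof cases
    case 1
    then show ?thesis
      using S12 P unfolding decomposable_def by blast
  next
    case 2
    then have "S1 + S2 = sum_mset (add_mset (R1 + R2) (P1 + P2)) + {#}"
      "\<forall>B\<in>#add_mset (R1 + R2) (P1 + P2). closed_block B"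
      using S12 P by (simp_all add: ac_simps)
    then show ?thesis
      unfolding decomposable_def admissible_residue_def by blast
  qed
qed

lemma fine_potential_simps:
  "profile S = (1, 0, 0) \<Longrightarrow> fine_potential S = 0"
  "profile S = (0, 1, 0) \<Longrightarrow> fine_potential S = 0"
  "profile S = (2, 0, 0) \<Longrightarrow> fine_potential S = 2 * excess S"
  "profile S = (1, 1, 0) \<Longrightarrow> fine_potential S = 2 * (K + h - excess S)"
  "profile S = (2, 1, 0) \<Longrightarrow> fine_potential S = 2 * (K + h)"
  "items S = 3 * negs S \<Longrightarrow>
    fine_potential S = 4 * (negs S * (K + h)) - 2 * excess S + 2 * defect S"
  "\<not> regular S \<Longrightarrow> fine_potential S = W - 2 * (K + h) * int (size S) ^ 2"
  by (auto simp: fine_potential_def regular_def profile_def)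

lemma fine_potential_regular_bounds:
  assumes "S \<subseteq># X" and "regular S"
  shows "0 \<le> fine_potential S \<and> fine_potential S \<le> 4 * (negs S * (K + h)) + 2 * (K + h) + 2"
proof -
  note b = excess_bounds[OF assms(1)] counts_bounds[OF assms(1)]
  consider "profile S \<in> {(1, 0, 0), (0, 1, 0)}" | "profile S = (2, 0, 0)"
    | "profile S = (1, 1, 0)" | "profile S = (2, 1, 0)" | "items S = 3 * negs S"
    using assms(2) unfolding regular_def by blast
  then show ?thesis
  proof cases
    case 5
    have "negs S * K \<le> negs S * (K + h)" "0 \<le> negs S * K"
      using b h_pos K_pos by (simp_all add: mult_left_mono)
    moreover have "items S * K = 3 * (negs S * K)"
      using 5 by simp
    ultimately show ?thesis
      using 5 b K_pos h_pos defect_bounds[of S] fine_potential_simps(6)[OF 5]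
      by (smt (verit))
  qed (use b h_pos K_pos in \<open>auto simp: fine_potential_simps profile_def\<close>)
qed

lemma fine_potential_bounds:
  assumes "S \<subseteq># X"
  shows "0 \<le> fine_potential S" and "fine_potential S + 2 * \<bar>offset S\<bar> \<le> W"
    and "regular S \<Longrightarrow> fine_potential S + 2 * \<bar>offset S\<bar> + 50 * ((K + h) * int m ^ 2) \<le> W"
proof -
  note b = counts_bounds[OF assms] and f = offset_abs_le[OF assms] and n = size_sq_le[OF assms]
  have "int (size S) \<le> int (size S) ^ 2"
    by (cases "size S") (simp_all add: power2_eq_square)
  then have C: "2 \<le> K + h" "negs S * (K + h) \<le> int m * (K + h)"
    "(K + h) * int (size S) \<le> 5 * (int m * (K + h))"
    "int m * (K + h) \<le> (K + h) * int m ^ 2" "K + h \<le> (K + h) * int m ^ 2"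
    "(K + h) * int (size S) \<le> (K + h) * int (size S) ^ 2"
    using mult_right_mono[OF b(5), of "K + h"] mult_left_mono[OF b(6), of "K + h"]
      mult_left_mono[OF m_sq_ge(1), of "K + h"] mult_left_mono[OF m_sq_ge(2), of "K + h"]
      mult_left_mono[of "int (size S)" "int (size S) ^ 2" "K + h"] h_lower K_pos
    by (simp_all add: algebra_simps)
  show regular: "fine_potential S + 2 * \<bar>offset S\<bar> + 50 * ((K + h) * int m ^ 2) \<le> W"
    if "regular S"
    using fine_potential_regular_bounds[OF assms that] f C W_large by (smt (verit))
  have irregular: "fine_potential S = W - 2 * ((K + h) * int (size S) ^ 2)" if "\<not> regular S"
    using fine_potential_simps(7)[OF that] by simp
  show "0 \<le> fine_potential S"
    using fine_potential_regular_bounds[OF assms] irregular n C W_large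
    by (cases "regular S") linarith+
  show "fine_potential S + 2 * \<bar>offset S\<bar> \<le> W"
    using regular irregular f C W_large by (cases "regular S") linarith+
qed

lemma tight_regular_merge_cases:
  assumes "regular S1" and "regular S2" and "weight S1 \<le> weight S2"
    and "psi (weight S1) + psi (weight S2) = psi (weight (S1 + S2)) + 2 * \<bar>weight (S1 + S2)\<bar>"
  obtains "profile S1 = (1, 0, 0)" "profile S2 = (1, 0, 0)"
  | "profile S1 = (0, 1, 0)" "profile S2 = (2, 0, 0)"
  | "profile S1 = (0, 1, 0)" "profile S2 = (1, 0, 0)"
  | "profile S1 = (1, 1, 0)" "profile S2 = (1, 0, 0)"
  | "profile S1 = (2, 1, 0)" "profile S2 = (1, 0, 0)"
  | "items S1 = 3 * negs S1" "items S2 = 3 * negs S2"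
proof -
  have "(weight S1, weight S2) \<in> {(1, 1), (-3, 2), (-3, 1), (-2, 1), (-1, 1), (0, 0)}"
    using psi_add_eq_cases assms(3,4) by simp
  then show ?thesis
    using assms(1,2) that by (auto simp: regular_def profile_def weight_def)
qed

lemma fine_potential_merge_tight_regular:
  assumes "S1 + S2 \<subseteq># X" and "regular S1" and "regular S2" and "weight S1 \<le> weight S2"
    and "psi (weight S1) + psi (weight S2) = psi (weight (S1 + S2)) + 2 * \<bar>weight (S1 + S2)\<bar>"
  shows "regular (S1 + S2) \<and> fine_potential (S1 + S2) \<le>
    2 * \<bar>sum_mset (S1 + S2)\<bar> - 2 * (W * \<bar>weight (S1 + S2)\<bar>) + fine_potential S1 + fine_potential S2"
proof -
  have "S1 \<subseteq># X" "S2 \<subseteq># X"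
    using assms(1) by (auto intro: subset_mset.order_trans[rotated])
  note b = excess_bounds[OF this(1)] counts_bounds[OF this(1)]
    excess_bounds[OF this(2)] counts_bounds[OF this(2)] W_ge h_lower K_pos
  have sum: "sum_mset (S1 + S2) = W * (weight S1 + weight S2) + offset S1 + offset S2"
    using sum_mset_eq_weight_offset[of "S1 + S2"] by simp
  from tight_regular_merge_cases[OF assms(2-5)] show ?thesis
  proof cases
    case 5
    then have "defect (S1 + S2) = 0"
      by (simp add: defect_def decomposable_residue admissible_residue_def open_block_def profile_def)
    with 5 show ?thesis
      using b sum by (auto simp: fine_potential_simps profile_def regular_def weight_def offset_def abs_if)
  next
    case 6
    have "defect (S1 + S2) \<le> \<bar>sum_mset (S1 + S2)\<bar> + defect S1 + defect S2"
    proof (cases "defect S1 = 0 \<and> defect S2 = 0 \<and> sum_mset (S1 + S2) = 0")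
      case True
      then have "decomposable (S1 + S2)"
        using decomposable_merge[OF assms(1)] by (auto simp: defect_def split: if_splits)
      then show ?thesis
        using True by (simp add: defect_def)
    next
      case False
      then show ?thesis
        by (auto simp: defect_def)
    qed
    with 6 show ?thesis
      by (simp add: fine_potential_simps regular_def weight_def algebra_simps)
  qed (use b sum in \<open>auto simp: fine_potential_simps profile_def regular_def weight_def offset_def abs_if\<close>)
qed

lemma fine_potential_merge_irregular:
  assumes "S1 + S2 \<subseteq># X" and "S2 \<noteq> {#}" and "\<not> regular S1"
  shows "fine_potential (S1 + S2) + 2 * \<bar>offset (S1 + S2)\<bar> \<le> fine_potential S1 + fine_potential S2"
proof -
  have "S1 \<subseteq># X" "S2 \<subseteq># X"
    using assms(1) by (auto intro: subset_mset.order_trans[rotated])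
  have S1: "fine_potential S1 = W - 2 * ((K + h) * int (size S1) ^ 2)"
    using fine_potential_simps(7)[OF assms(3)] by simp
  show ?thesis
  proof (cases "regular (S1 + S2)")
    case True
    then show ?thesis
      using S1 fine_potential_bounds(3)[OF assms(1)] fine_potential_bounds(1)[OF \<open>S2 \<subseteq># X\<close>]
        size_sq_le[OF \<open>S1 \<subseteq># X\<close>] by linarith
  next
    case False
    define n1 n2 where "n1 = int (size S1)" and "n2 = int (size S2)"
    have "n1 + n2 \<le> (n1 + n2) ^ 2 - n1 ^ 2"
      using assms(2) by (intro add_le_power2_diff) (simp_all add: n1_def n2_def Suc_le_eq nonempty_has_size)
    then have "(K + h) * (n1 + n2) \<le> (K + h) * ((n1 + n2) ^ 2 - n1 ^ 2)"
      using h_pos K_pos by (intro mult_left_mono) auto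
    then have "(K + h) * (n1 + n2) \<le> (K + h) * (n1 + n2) ^ 2 - (K + h) * n1 ^ 2"
      by (simp add: right_diff_distrib)
    moreover have "fine_potential (S1 + S2) = W - 2 * ((K + h) * (n1 + n2) ^ 2)"
      using fine_potential_simps(7)[OF False] by (simp add: n1_def n2_def)
    moreover have "\<bar>offset (S1 + S2)\<bar> \<le> (K + h) * (n1 + n2)"
      using offset_abs_le[OF assms(1)] by (simp add: n1_def n2_def)
    ultimately show ?thesis
      using S1 fine_potential_bounds(1)[OF \<open>S2 \<subseteq># X\<close>] by (simp add: n1_def)
  qed
qed

lemma weight_abs_le: "W * \<bar>weight S\<bar> \<le> \<bar>sum_mset S\<bar> + \<bar>offset S\<bar>"
  using sum_mset_eq_weight_offset[of S] W_ge K_pos by (simp add: abs_mult)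

lemma fine_potential_merge_tight:
  assumes "S1 + S2 \<subseteq># X" and "S1 \<noteq> {#}" and "S2 \<noteq> {#}"
    and "psi (weight S1) + psi (weight S2) = psi (weight (S1 + S2)) + 2 * \<bar>weight (S1 + S2)\<bar>"
  shows "fine_potential (S1 + S2) \<le>
    2 * \<bar>sum_mset (S1 + S2)\<bar> - 2 * (W * \<bar>weight (S1 + S2)\<bar>) + fine_potential S1 + fine_potential S2"
proof -
  consider "regular S1" "regular S2" | "\<not> regular S1" | "\<not> regular S2"
    by blast
  then show ?thesis
  proof cases
    case 1
    then show ?thesis
      using fine_potential_merge_tight_regular[OF assms(1) 1 _ assms(4)] fine_potential_merge_tight_regular[of S2 S1] assms(1,4)
      by (cases "weight S1 \<le> weight S2") (auto simp: add.commute)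
  next
    case 2
    then show ?thesis
      using fine_potential_merge_irregular[OF assms(1,3)] weight_abs_le[of "S1 + S2"] by linarith
  next
    case 3
    then show ?thesis
      using fine_potential_merge_irregular[of S2 S1] assms(1,2) weight_abs_le[of "S1 + S2"]
      by (simp add: add.commute)
  qed
qed

lemma potential_merge:
  assumes "S1 + S2 \<subseteq># X" and "S1 \<noteq> {#}" and "S2 \<noteq> {#}"
  shows "potential (S1 + S2) \<le> 2 * \<bar>sum_mset (S1 + S2)\<bar> + potential S1 + potential S2"
proof -
  have "S1 \<subseteq># X" "S2 \<subseteq># X"
    using assms(1) by (auto intro: subset_mset.order_trans[rotated])
  define w1 w2 w where "w1 = weight S1" and "w2 = weight S2" and "w = weight (S1 + S2)"
  then have "w = w1 + w2"
    by simp
  have split: "potential (S1 + S2) = potential S1 + potential S2 + W * (psi w1 + psi w2 - psi w)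
      + fine_potential (S1 + S2) - fine_potential S1 - fine_potential S2"
    by (simp add: potential_def w1_def w2_def w_def algebra_simps)
  consider (tight) "psi w1 + psi w2 = psi w + 2 * \<bar>w\<bar>"
    | (loose) "psi w1 + psi w2 \<le> psi w + 2 * \<bar>w\<bar> - 1"
    using psi_add_le[of w1 w2] \<open>w = w1 + w2\<close> by fastforce
  then show ?thesis
  proof cases
    case tight
    then have "W * (psi w1 + psi w2 - psi w) = 2 * (W * \<bar>w\<bar>)"
      by simp
    then show ?thesis
      using split tight fine_potential_merge_tight[OF assms] by (simp add: w1_def w2_def w_def)
  next
    case loose
    then have "W * (psi w1 + psi w2 - psi w) \<le> W * (2 * \<bar>w\<bar> - 1)"
      using W_ge K_pos by (intro mult_left_mono) auto
    then show ?thesis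
      using split fine_potential_bounds(2)[OF assms(1)] fine_potential_bounds(1)[OF \<open>S1 \<subseteq># X\<close>]
        fine_potential_bounds(1)[OF \<open>S2 \<subseteq># X\<close>] weight_abs_le[of "S1 + S2"]
      by (simp add: w_def algebra_simps)
  qed
qed

lemma potential_singleton:
  assumes "x \<in># X"
  shows "potential {#x#} \<le> 0"
proof -
  consider "x = -H" | "x = h" | "x \<in># A"
    using X_elem_cases[OF assms] by blast
  then show ?thesis
  proof cases
    case 1
    then show ?thesis
      using neg_ne_pad
      by (simp add: potential_def fine_potential_simps profile_def weight_def is_item_def psi_def)
  next
    case 2
    have "defect {#h#} = 0"
      by (simp add: defect_def decomposable_residue admissible_residue_def)
    then show ?thesis
      unfolding 2 using not_sym[OF neg_ne_pad]
      by (simp add: potential_def fine_potential_simps weight_def is_item_def psi_def)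
  next
    case 3
    then show ?thesis
      using is_item_A[OF 3]
      by (simp add: potential_def fine_potential_simps profile_def weight_def psi_def is_item_def)
  qed
qed

lemma potential_X: "potential X = 2 * int m * (H + h) + 2 * defect X"
proof -
  have "potential X = 6 * int m * W + 2 * int m * K + 4 * int m * h + 2 * defect X"
    using counts_X by (simp add: potential_def weight_def psi_def fine_potential_simps algebra_simps)
  also have "\<dots> = 2 * int m * (H + h) + 2 * defect X"
  proof -
    have "2 * int m * (H + h) = 2 * int m * (3 * W + K + 2 * h)"
      using H_eq by simp
    then show ?thesis
      by (simp add: algebra_simps)
  qed
  finally show ?thesis .
qed

lemma cost_lower_bound:
  assumes "leaves T = X"
  shows "int m * (H + h) + defect X \<le> cost T"
  using potential_le_cost[of X potential T] potential_singleton potential_merge potential_X assms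
  by simp

subsection \<open>The equality case\<close>

lemma counts_closed_blocks:
  "\<forall>B\<in>#P. closed_block B \<Longrightarrow> negs (sum_mset P) = int (size P) \<and> pads (sum_mset P) = int (size P)"
  by (induction P) (auto simp: closed_block_def profile_def)

lemma closed_block_item_sum:
  assumes "closed_block B"
  shows "sum_mset (filter_mset is_item B) = H - h"
proof -
  have B: "items B = 3" "negs B = 1" "pads B = 1" "sum_mset B = 0"
    using assms by (simp_all add: closed_block_def profile_def)
  then have "excess B = K"
    using sum_mset_eq_weight_offset[of B] by (simp add: weight_def offset_def)
  moreover have "sum_mset (filter_mset is_item B) = excess B + items B * W"
    by (simp add: excess_def items_def sum_mset_minus_const)
  ultimately show ?thesis
    using B(1) H_eq by simp
qed

lemma decomposable_X_imp_partition:
  assumes "decomposable X"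
  shows "three_partition_pos A m (H - h)"
proof -
  obtain P R where X: "X = sum_mset P + R" and P: "\<forall>B\<in>#P. closed_block B"
    and R: "admissible_residue R"
    using assms unfolding decomposable_def by blast
  have "negs X = int (size P) + negs R" "pads X = int (size P) + pads R"
    unfolding X using counts_closed_blocks[OF P] by simp_all
  then have "negs R = pads R" "int m = int (size P) + negs R"
    using counts_X(2,3) by linarith+
  then have "R = {#}"
    using R counts_singleton_pad by (auto simp: admissible_residue_def open_block_def profile_def)
  then have "size P = m"
    using \<open>int m = int (size P) + negs R\<close> by simp
  define Q where "Q = image_mset (filter_mset is_item) P"
  have "sum_mset Q = A"
    using arg_cong[OF X, of "filter_mset is_item"] \<open>R = {#}\<close> filter_item_X
    by (simp add: Q_def filter_mset_sum_mset)
  moreover have "\<forall>B\<in>#Q. sum_mset B = H - h"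
    using P closed_block_item_sum by (auto simp: Q_def)
  moreover have "size Q = m"
    using \<open>size P = m\<close> by (simp add: Q_def)
  ultimately show ?thesis
    unfolding three_partition_pos_def by blast
qed

lemma block_size_three:
  assumes "B \<subseteq># A" and "sum_mset B = H - h"
  shows "size B = 3"
proof -
  have A: "4 * W + K + 1 \<le> 4 * x" "2 * x \<le> 2 * W + K - 1" if "x \<in># B" for x
    using A_bounds[OF mset_subset_eqD[OF assms(1) that]] by auto
  have "int (size B) * (4 * W + K + 1) \<le> (\<Sum>x\<in>#B. 4 * x)"
    using A by (intro sum_mset_lower_bound) auto
  moreover have "(\<Sum>x\<in>#B. 2 * x) \<le> int (size B) * (2 * W + K - 1)"
    using A by (intro sum_mset_upper_bound) auto
  moreover have "sum_mset B = 3 * W + K"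
    using assms(2) H_eq by simp
  ultimately have lower: "int (size B) * (4 * W + K + 1) \<le> 4 * (3 * W + K)"
    and upper: "2 * (3 * W + K) \<le> int (size B) * (2 * W + K - 1)"
    by (simp_all add: sum_mset_distrib_left[symmetric])
  have "\<not> size B \<le> 2"
  proof
    assume "size B \<le> 2"
    then have "int (size B) * (2 * W + K - 1) \<le> 2 * (2 * W + K - 1)"
      using W_ge K_pos by (intro mult_right_mono) auto
    then show False
      using upper W_ge K_pos by simp
  qed
  moreover have "\<not> size B \<ge> 4"
  proof
    assume "size B \<ge> 4"
    then have "4 * (4 * W + K + 1) \<le> int (size B) * (4 * W + K + 1)"
      using W_ge K_pos by (intro mult_right_mono) auto
    then show False
      using lower W_ge K_pos by simp
  qed
  ultimately show ?thesis
    by linarith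
qed

lemma partition_imp_gadget_tree:
  assumes "three_partition_pos A m (H - h)"
  shows "\<exists>T. leaves T = X \<and> cost T = int m * (H + h)"
proof -
  obtain P where P: "size P = m" "sum_mset P = A" "\<forall>B\<in>#P. sum_mset B = H - h"
    using assms unfolding three_partition_pos_def by blast
  have "\<exists>x y z. B = {#x, y, z#} \<and> 0 \<le> y + z \<and> y + z \<le> H \<and> x + y + z = H - h"
    if B_in: "B \<in># P" for B
  proof -
    obtain P' where "P = add_mset B P'"
      using multi_member_split[OF B_in] by blast
    then have "B \<subseteq># A"
      using P(2) by auto
    then have "size B = 3"
      using block_size_three B_in P(3) by blast
    then obtain x y z where B: "B = {#x, y, z#}"
      by (rule size_eq_3_obtain)
    have yz: "y \<in># A" "z \<in># A"
      using \<open>B \<subseteq># A\<close> unfolding B by (auto dest: mset_subset_eqD)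
    have "sum_mset B = H - h"
      using P(3) B_in by blast
    then have "x + y + z = H - h"
      using B by (simp add: add.assoc)
    moreover have "0 \<le> y + z" "y + z \<le> H"
      using A_bounds[OF yz(1)] A_bounds[OF yz(2)] A_gt_W[OF yz(1)] A_gt_W[OF yz(2)] W_ge K_pos H_eq h_pos
      by linarith+
    ultimately show ?thesis
      using B by blast
  qed
  then obtain T where "leaves T = sum_mset P + replicate_mset (size P) (-H) + replicate_mset (size P) h"
    "cost T = int (size P) * (H + h)"
    using triple_gadgets_tree[of h P H] h_pos P(1) m_pos by fastforce
  then show ?thesis
    using P by auto
qed

theorem min_cost_tree_cost:
  assumes "min_cost_tree T X"
  shows "int m * (H + h) \<le> cost T \<and> (cost T = int m * (H + h) \<longleftrightarrow> three_partition_pos A m (H - h))"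
proof -
  have "leaves T = X" and minimal: "\<And>T'. leaves T' = X \<Longrightarrow> cost T \<le> cost T'"
    using assms by (simp_all add: min_cost_tree_def addition_tree_over_def)
  have lower: "int m * (H + h) + defect X \<le> cost T"
    using \<open>leaves T = X\<close> by (rule cost_lower_bound)
  have "cost T \<le> int m * (H + h)" if "three_partition_pos A m (H - h)"
    using partition_imp_gadget_tree[OF that] minimal by force
  moreover have "three_partition_pos A m (H - h)" if "cost T \<le> int m * (H + h)"
  proof -
    have "decomposable X"
      using that lower by (simp add: defect_def split: if_splits)
    then show ?thesis
      by (rule decomposable_X_imp_partition)
  qed
  ultimately show ?thesis
    using lower defect_bounds[of X] by linarith
qed

end

section \<open>Instantiating the reduction\<close>

lemma padding_bounds:
  fixes m K :: nat and W L h :: int and eps :: real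
  assumes "m > 0" and "K > 0" and "W = 100 * (5 * int m) ^ 2 * int K" and "L = 3 * W + int K"
    and "eps = 1 / (400 * (5 * real m) ^ 2)" and "h = \<lfloor>4 * eps * real_of_int L\<rfloor>"
  shows "3 * int K \<le> h" and "h \<le> 4 * int K"
proof -
  have "1 \<le> real m ^ 2"
    using assms(1) by simp
  then have "real K * 1 \<le> real K * (2500 * real m ^ 2)"
    by (intro mult_left_mono) simp_all
  then have frac: "0 \<le> real K / (2500 * real m ^ 2)" "real K / (2500 * real m ^ 2) \<le> real K"
    by (simp_all add: divide_le_eq)
  have "4 * eps * real_of_int L = (7500 * real m ^ 2 * real K + real K) / (2500 * real m ^ 2)"
    using assms(3-5) by (simp add: power_mult_distrib)
  also have "\<dots> = 3 * real K + real K / (2500 * real m ^ 2)"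
    using assms(1) by (simp add: field_simps)
  finally have L_scaled: "4 * eps * real_of_int L = 3 * real K + real K / (2500 * real m ^ 2)" .
  have "real_of_int (3 * int K) \<le> 4 * eps * real_of_int L"
    using L_scaled frac(1) by simp
  then show "3 * int K \<le> h"
    unfolding assms(6) by (rule le_floor_iff[THEN iffD2])
  have "4 * eps * real_of_int L \<le> real_of_int (4 * int K)"
    using L_scaled frac(2) by simp
  then have "h \<le> \<lfloor>real_of_int (4 * int K)\<rfloor>"
    unfolding assms(6) by (rule floor_mono)
  then show "h \<le> 4 * int K"
    by (simp only: floor_of_int)
qed

lemma item_bounds:
  fixes K :: nat and b W :: int
  assumes "real K / 4 < real_of_int b \<and> real_of_int b < real K / 2"
  shows "4 * W + int K < 4 * (b + W) \<and> 2 * (b + W) < 2 * W + int K"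
proof -
  have "real_of_int (int K) < real_of_int (4 * b)" "real_of_int (2 * b) < real_of_int (int K)"
    using assms by simp_all
  then show ?thesis
    by (simp only: of_int_less_iff) (simp add: algebra_simps)
qed

theorem lemma2p10:
  fixes m K :: nat and b :: "nat \<Rightarrow> int" and W L h H :: int and eps :: real
    and A X :: "int multiset" and a :: "nat \<Rightarrow> int" and T :: atree
  assumes "m > 0" and "K > 0"
    and "\<And>i. i < 3 * m \<Longrightarrow> b i > 0"
    and "\<And>i. i < 3 * m \<Longrightarrow> real K / 4 < real_of_int (b i) \<and> real_of_int (b i) < real K / 2"
    and "(\<Sum>i<3 * m. b i) = int m * int K"
    and "W = 100 * (5 * int m)^2 * int K"
    and "\<And>i. a i = b i + W"
    and "A = mset (map a [0..<3 * m])"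
    and "L = 3 * W + int K"
    and "eps = 1 / (400 * (5 * real m)^2)"
    and "h = \<lfloor>4 * eps * real_of_int L\<rfloor>"
    and "H = L + h"
    and "X = A + replicate_mset m (- H) + replicate_mset m h"
    and "min_cost_tree T X"
  shows "cost T \<ge> int m * (H + h) \<and>
         (cost T = int m * (H + h) \<longleftrightarrow> three_partition_pos A m L)"
proof -
  interpret three_partition_reduction m "int K" W h H A
  proof
    show "W = 2500 * int m ^ 2 * int K"
      using assms(6) by (simp add: power_mult_distrib)
    show "3 * int K \<le> h" "h \<le> 4 * int K"
      using padding_bounds[OF assms(1,2,6,9-11)] by simp_all
    show "4 * W + int K < 4 * x \<and> 2 * x < 2 * W + int K" if "x \<in># A" for x
      using that assms(4,7,8) item_bounds by fastforce
    have "sum_mset A = (\<Sum>i<3 * m. a i)"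
      using assms(8) by (simp add: sum_unfold_sum_mset atLeast0LessThan)
    also have "\<dots> = (\<Sum>i<3 * m. b i + W)"
      using assms(7) by simp
    finally show "sum_mset A = int m * (3 * W + int K)"
      using assms(5) by (simp add: sum.distrib algebra_simps)
  qed (use assms(1,2,8,9,12) in simp_all)
  have "L = H - h"
    using assms(12) by simp
  then show ?thesis
    using min_cost_tree_cost[OF assms(14)[unfolded assms(13)]] by simp
qed

end
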